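(* A homomorphism $a:X\to G$ is a generalized subgroup of $G$ if and only if (a) $\mathrm{Ker}(a)$ is contained in the center of $X$, and (b) $\mathrm{Hom}(X,\mathrm{Ker}(a))=0$.
   Context: A homomorphism $a:X\to G$ is a generalized subgroup of $G$ if the map $\mathrm{Hom}(X,X)\to\mathrm{Hom}(X,G)$, $f\mapsto af$, is injective. $\mathrm{Hom}(A,B)=0$ means the only homomorphism $A\to B$ is trivial. *)

theory Defs
  imports "HOL-Algebra.Algebra"
begin

definition group_center :: "('a, 'm) monoid_scheme \<Rightarrow> 'a set" where
  "group_center H = {z \<in> carrier H. \<forall>x \<in> carrier H. z \<otimes>\<^bsub>H\<^esub> x = x \<otimes>\<^bsub>H\<^esub> z}"

text \<open>Homomorphisms are identified with their restriction to the carrier of the domain.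
  a : X \<rightarrow> G is a generalized subgroup iff f \<mapsto> a \<circ> f from Hom(X,X) to Hom(X,G) is injective.\<close>
definition generalized_subgroup ::
  "('a, 'm) monoid_scheme \<Rightarrow> ('b, 'n) monoid_scheme \<Rightarrow> ('a \<Rightarrow> 'b) \<Rightarrow> bool" where
  "generalized_subgroup H K a \<longleftrightarrow>
     (\<forall>f \<in> hom H H. \<forall>g \<in> hom H H.
        (\<forall>x \<in> carrier H. a (f x) = a (g x)) \<longrightarrow> (\<forall>x \<in> carrier H. f x = g x))"

definition trivial_homs :: "('a, 'm) monoid_scheme \<Rightarrow> ('b, 'n) monoid_scheme \<Rightarrow> bool" where
  "trivial_homs A B \<longleftrightarrow> (\<forall>f \<in> hom A B. \<forall>x \<in> carrier A. f x = \<one>\<^bsub>B\<^esub>)"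

end

theory Submission
  imports Defs
begin

(* For a homomorphism a : H \<rightarrow> G with kernel K, two endomorphisms f, g of H satisfy
   a \<circ> f = a \<circ> g exactly when their "quotient" q(x) = f(x) g(x)\<inverse> takes values in K.
   The proof rests on two ways of moving between endomorphisms and maps into K:
   - if q(x) = f(x) g(x)\<inverse> is central for all x, then q is itself a homomorphism;
   - if \<phi> is a homomorphism with central values, then x \<mapsto> f(x) \<phi>(x) is a homomorphism.
   Necessity: conjugation by k \<in> K is an endomorphism indistinguishable from the identity
   after composing with a, so it is the identity, i.e. k is central; then any \<phi> : H \<rightarrow> K
   yields the endomorphism x \<mapsto> x \<phi>(x), again indistinguishable from the identity, so \<phi> = 1.
   Sufficiency: if a \<circ> f = a \<circ> g, the quotient q is a homomorphism H \<rightarrow> K (K being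
   central), hence trivial, hence f = g. *)

lemma group_centerD:
  "z \<in> group_center H \<Longrightarrow> x \<in> carrier H \<Longrightarrow> z \<otimes>\<^bsub>H\<^esub> x = x \<otimes>\<^bsub>H\<^esub> z"
  by (simp add: group_center_def)

lemma hom_into_subset_iff:
  "\<phi> \<in> hom L (H\<lparr>carrier := S\<rparr>) \<longleftrightarrow> \<phi> \<in> hom L H \<and> \<phi> ` carrier L \<subseteq> S"
  if "S \<subseteq> carrier H"
  using that by (auto simp: hom_def)

lemma id_in_hom: "(\<lambda>x. x) \<in> hom H H"
  by (rule homI) auto

lemma (in group) conjugation_in_hom:
  assumes k: "k \<in> carrier G"
  shows "(\<lambda>x. k \<otimes> x \<otimes> inv k) \<in> hom G G"
proof (rule homI)
  fix x y assume x: "x \<in> carrier G" and y: "y \<in> carrier G"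
  have "k \<otimes> x \<otimes> inv k \<otimes> (k \<otimes> y \<otimes> inv k) = k \<otimes> x \<otimes> (inv k \<otimes> k) \<otimes> y \<otimes> inv k"
    using x y k by (simp only: m_assoc m_closed inv_closed)
  also have "\<dots> = k \<otimes> (x \<otimes> y) \<otimes> inv k"
    using x y k by (simp add: m_assoc)
  finally show "k \<otimes> (x \<otimes> y) \<otimes> inv k = k \<otimes> x \<otimes> inv k \<otimes> (k \<otimes> y \<otimes> inv k)" by simp
qed (use k in auto)

lemma (in group) central_twist_in_hom:
  assumes f: "f \<in> hom L G" and \<phi>: "\<phi> \<in> hom L G"
    and central: "\<And>x. x \<in> carrier L \<Longrightarrow> \<phi> x \<in> group_center G"
  shows "(\<lambda>x. f x \<otimes> \<phi> x) \<in> hom L G"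
proof (rule homI)
  fix x y assume x: "x \<in> carrier L" and y: "y \<in> carrier L"
  note closed = hom_in_carrier[OF f x] hom_in_carrier[OF f y]
    hom_in_carrier[OF \<phi> x] hom_in_carrier[OF \<phi> y]
  have "f (x \<otimes>\<^bsub>L\<^esub> y) \<otimes> \<phi> (x \<otimes>\<^bsub>L\<^esub> y) = f x \<otimes> (f y \<otimes> \<phi> x) \<otimes> \<phi> y"
    using x y closed f \<phi> by (simp add: hom_mult m_assoc)
  also have "\<dots> = f x \<otimes> (\<phi> x \<otimes> f y) \<otimes> \<phi> y"
    using group_centerD[OF central[OF x] closed(2)] by simp
  also have "\<dots> = f x \<otimes> \<phi> x \<otimes> (f y \<otimes> \<phi> y)"
    using closed by (simp add: m_assoc)
  finally show "f (x \<otimes>\<^bsub>L\<^esub> y) \<otimes> \<phi> (x \<otimes>\<^bsub>L\<^esub> y) = f x \<otimes> \<phi> x \<otimes> (f y \<otimes> \<phi> y)" .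
qed (use f \<phi> in \<open>auto intro: hom_in_carrier\<close>)

lemma (in group) central_quotient_in_hom:
  assumes f: "f \<in> hom L G" and g: "g \<in> hom L G"
    and central: "\<And>x. x \<in> carrier L \<Longrightarrow> f x \<otimes> inv g x \<in> group_center G"
  shows "(\<lambda>x. f x \<otimes> inv g x) \<in> hom L G"
proof (rule homI)
  fix x y assume x: "x \<in> carrier L" and y: "y \<in> carrier L"
  define q where "q = (\<lambda>x. f x \<otimes> inv g x)"
  note closed = hom_in_carrier[OF f x] hom_in_carrier[OF f y]
    hom_in_carrier[OF g x] hom_in_carrier[OF g y]
  have q_closed: "q x \<in> carrier G" "q y \<in> carrier G"
    using closed by (simp_all add: q_def)
  have "q (x \<otimes>\<^bsub>L\<^esub> y) = f x \<otimes> q y \<otimes> inv g x"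
    using x y closed f g by (simp add: q_def hom_mult m_assoc inv_mult_group)
  also have "\<dots> = q y \<otimes> f x \<otimes> inv g x"
    using group_centerD[OF central[OF y] closed(1)] by (simp add: q_def)
  also have "\<dots> = q y \<otimes> q x"
    using closed q_closed by (simp add: q_def m_assoc)
  also have "\<dots> = q x \<otimes> q y"
    using group_centerD[OF central[OF y] q_closed(1)] by (simp add: q_def)
  finally show "f (x \<otimes>\<^bsub>L\<^esub> y) \<otimes> inv g (x \<otimes>\<^bsub>L\<^esub> y) = f x \<otimes> inv g x \<otimes> (f y \<otimes> inv g y)"
    by (simp add: q_def)
qed (use f g in \<open>auto intro: hom_in_carrier\<close>)

lemma generalized_subgroup_fixes:
  assumes "generalized_subgroup H G a" and "f \<in> hom H H"
    and "\<And>x. x \<in> carrier H \<Longrightarrow> a (f x) = a x" and "x \<in> carrier H"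
  shows "f x = x"
  using assms id_in_hom unfolding generalized_subgroup_def by (metis (no_types, lifting))

lemma kernel_subset: "kernel H G a \<subseteq> carrier H"
  by (auto simp: kernel_def)

context
  fixes H :: "('a, 'm) monoid_scheme" and G :: "('b, 'n) monoid_scheme" and a :: "'a \<Rightarrow> 'b"
  assumes a: "group_hom H G a"
begin

interpretation H: group H using a by (simp add: group_hom_def)
interpretation a: group_hom H G a by (fact a)

(* Condition (a): the kernel of a generalized subgroup is central,
   since conjugation by a kernel element is invisible to a. *)
lemma kernel_central_if_generalized_subgroup:
  assumes gs: "generalized_subgroup H G a"
  shows "kernel H G a \<subseteq> group_center H"
proof
  fix k assume k: "k \<in> kernel H G a"
  then have kH: "k \<in> carrier H" and ak: "a k = \<one>\<^bsub>G\<^esub>" by (auto simp: kernel_def)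
  have conj_trivial: "k \<otimes>\<^bsub>H\<^esub> x \<otimes>\<^bsub>H\<^esub> inv\<^bsub>H\<^esub> k = x" if x: "x \<in> carrier H" for x
  proof (rule generalized_subgroup_fixes[OF gs H.conjugation_in_hom[OF kH] _ x])
    fix y assume "y \<in> carrier H"
    then show "a (k \<otimes>\<^bsub>H\<^esub> y \<otimes>\<^bsub>H\<^esub> inv\<^bsub>H\<^esub> k) = a y"
      using kH ak by (simp add: a.hom_mult a.hom_inv)
  qed
  show "k \<in> group_center H" unfolding group_center_def
  proof (intro CollectI conjI ballI kH)
    fix x assume x: "x \<in> carrier H"
    have "k \<otimes>\<^bsub>H\<^esub> x \<otimes>\<^bsub>H\<^esub> inv\<^bsub>H\<^esub> k \<otimes>\<^bsub>H\<^esub> k = x \<otimes>\<^bsub>H\<^esub> k"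
      using conj_trivial[OF x] by simp
    then show "k \<otimes>\<^bsub>H\<^esub> x = x \<otimes>\<^bsub>H\<^esub> k" using x kH by (simp add: H.m_assoc)
  qed
qed

(* Condition (b): given (a), every homomorphism \<phi> : H \<rightarrow> Ker a is trivial,
   since x \<mapsto> x \<phi>(x) is an endomorphism invisible to a. *)
lemma no_homs_to_kernel_if_generalized_subgroup:
  assumes gs: "generalized_subgroup H G a"
    and central: "kernel H G a \<subseteq> group_center H"
  shows "trivial_homs H (H\<lparr>carrier := kernel H G a\<rparr>)"
  unfolding trivial_homs_def
proof (intro ballI)
  fix \<phi> x assume \<phi>: "\<phi> \<in> hom H (H\<lparr>carrier := kernel H G a\<rparr>)" and x: "x \<in> carrier H"
  have "\<phi> \<in> hom H H \<and> \<phi> ` carrier H \<subseteq> kernel H G a"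
    using \<phi> hom_into_subset_iff[OF kernel_subset[of H G a]] by blast
  then have \<phi>_H: "\<phi> \<in> hom H H" and \<phi>_K: "\<And>y. y \<in> carrier H \<Longrightarrow> \<phi> y \<in> kernel H G a"
    by auto
  have twist: "(\<lambda>y. y \<otimes>\<^bsub>H\<^esub> \<phi> y) \<in> hom H H"
    using H.central_twist_in_hom[OF id_in_hom \<phi>_H] \<phi>_K central by auto
  have "x \<otimes>\<^bsub>H\<^esub> \<phi> x = x"
  proof (rule generalized_subgroup_fixes[OF gs twist _ x])
    fix y assume "y \<in> carrier H"
    then show "a (y \<otimes>\<^bsub>H\<^esub> \<phi> y) = a y"
      using \<phi>_K hom_in_carrier[OF \<phi>_H] by (simp add: a.hom_mult kernel_def)
  qed
  then show "\<phi> x = \<one>\<^bsub>H\<lparr>carrier := kernel H G a\<rparr>\<^esub>"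
    using x hom_in_carrier[OF \<phi>_H x] H.r_cancel_one by simp
qed

(* Sufficiency: the quotient of two endomorphisms that agree after a is a homomorphism
   into the central kernel, hence trivial. *)
lemma generalized_subgroup_if_central_kernel:
  assumes central: "kernel H G a \<subseteq> group_center H"
    and trivial: "trivial_homs H (H\<lparr>carrier := kernel H G a\<rparr>)"
  shows "generalized_subgroup H G a"
  unfolding generalized_subgroup_def
proof (intro ballI impI)
  fix f g x assume f: "f \<in> hom H H" and g: "g \<in> hom H H"
    and agree: "\<forall>y\<in>carrier H. a (f y) = a (g y)" and x: "x \<in> carrier H"
  define q where "q = (\<lambda>y. f y \<otimes>\<^bsub>H\<^esub> inv\<^bsub>H\<^esub> g y)"
  have q_K: "q y \<in> kernel H G a" if y: "y \<in> carrier H" for y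
    using y hom_in_carrier[OF f y] hom_in_carrier[OF g y] agree
    by (simp add: q_def kernel_def a.hom_mult a.hom_inv)
  have "q \<in> hom H H"
    using H.central_quotient_in_hom[OF f g] q_K central by (auto simp: q_def)
  then have "q \<in> hom H (H\<lparr>carrier := kernel H G a\<rparr>)"
    using hom_into_subset_iff[OF kernel_subset[of H G a]] q_K by auto
  then have "f x \<otimes>\<^bsub>H\<^esub> inv\<^bsub>H\<^esub> g x = \<one>\<^bsub>H\<^esub>"
    using trivial x unfolding trivial_homs_def q_def by fastforce
  then have "f x \<otimes>\<^bsub>H\<^esub> inv\<^bsub>H\<^esub> g x \<otimes>\<^bsub>H\<^esub> g x = g x"
    using hom_in_carrier[OF g x] by simp
  then show "f x = g x"
    using hom_in_carrier[OF f x] hom_in_carrier[OF g x] by (simp add: H.m_assoc)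
qed

end

theorem proposition4p2:
  fixes H :: "('a, 'm) monoid_scheme" and G :: "('b, 'n) monoid_scheme" and a :: "'a \<Rightarrow> 'b"
  assumes "group H" and "group G" and "a \<in> hom H G"
  shows "generalized_subgroup H G a \<longleftrightarrow>
           (kernel H G a \<subseteq> group_center H \<and>
            trivial_homs H (H\<lparr>carrier := kernel H G a\<rparr>))"
proof -
  have a: "group_hom H G a"
    using assms by (simp add: group_hom_def group_hom_axioms_def)
  show ?thesis
    using kernel_central_if_generalized_subgroup[OF a]
      no_homs_to_kernel_if_generalized_subgroup[OF a]
      generalized_subgroup_if_central_kernel[OF a]
    by blast
qed

end
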